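(* Let $T>0$, $L>0$, $V_{\max}>0$, $m_a>0$ and $\alpha_1>0$, and set $\alpha_2=0$. Call a continuous function $v:[0,T]\to\mathbb{R}$ admissible if $v(0)=0$, $0\le v(t)\le V_{\max}$ for all $t\in[0,T]$, $\int_0^T v(\tau)\,\mathrm{d}\tau\le L$, and $v$ is not identically zero. For admissible $v$, let $x(t)=\int_0^t v(\tau)\,\mathrm{d}\tau$, $$\mathcal{V}(v)=\frac{1}{T}\int_0^T\left[x(t)-\frac{1}{T}\int_0^T x(\tau)\,\mathrm{d}\tau\right]^2\mathrm{d}t,\qquad \mathcal{E}(v)=\frac{1}{2}m_a v^2(T)+\int_0^T\left(\alpha_1 v^2(t)+\alpha_2 v^3(t)\right)\mathrm{d}t,$$ and define the sensing energy efficiency $\mathcal{V}(v)/\mathcal{E}(v)$. Then the profile $$v^*(t)=\min\!\left(V_{\max},\frac{\pi L}{2T}\right)\sin\!\left(\frac{\pi t}{T}\right)$$ is admissible and maximizes $\mathcal{V}(v)/\mathcal{E}(v)$ over all admissible $v$; moreover, among all admissible profiles that maximize $\mathcal{V}(v)/\mathcal{E}(v)$, $v^*$ attains the largest value of $\mathcal{V}(v)$.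
   Context: Physical interpretation: a single movable antenna of mass $m_a$ moves along a linear track of length $L$ during a sensing interval $[0,T]$ with velocity profile $v(t)$; $\mathcal{V}(v)$ is the spatial variance of its trajectory (inversely proportional to the Cramér–Rao bound of direction-of-arrival estimation), $\mathcal{E}(v)$ is the mechanical energy consumed, with $\alpha_1$ the linear damping coefficient and $\alpha_2$ the quadratic aerodynamic drag coefficient (here $\alpha_2=0$, the linear-damping-dominated regime). *)

theory Defs
  imports "HOL-Analysis.Analysis"
begin

definition admissible :: "real \<Rightarrow> real \<Rightarrow> real \<Rightarrow> (real \<Rightarrow> real) \<Rightarrow> bool" where
  "admissible T L Vmax v \<longleftrightarrow>
     continuous_on {0..T} v \<and> v 0 = 0 \<and>
     (\<forall>t\<in>{0..T}. 0 \<le> v t \<and> v t \<le> Vmax) \<and>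
     integral {0..T} v \<le> L \<and>
     (\<exists>t\<in>{0..T}. v t \<noteq> 0)"

definition position :: "(real \<Rightarrow> real) \<Rightarrow> real \<Rightarrow> real" where
  "position v t = integral {0..t} v"

definition spatial_var :: "real \<Rightarrow> (real \<Rightarrow> real) \<Rightarrow> real" where
  "spatial_var T v = (1 / T) * integral {0..T}
     (\<lambda>t. (position v t - (1 / T) * integral {0..T} (position v)) ^ 2)"

definition mech_energy :: "real \<Rightarrow> real \<Rightarrow> real \<Rightarrow> real \<Rightarrow> (real \<Rightarrow> real) \<Rightarrow> real" where
  "mech_energy T ma a1 a2 v = (1 / 2) * ma * (v T) ^ 2 +
     integral {0..T} (\<lambda>t. a1 * (v t) ^ 2 + a2 * (v t) ^ 3)"

definition vstar :: "real \<Rightarrow> real \<Rightarrow> real \<Rightarrow> real \<Rightarrow> real" where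
  "vstar T L Vmax t = min Vmax (pi * L / (2 * T)) * sin (pi * t / T)"

end

theory Submission
  imports Defs
begin

(* Let a = pi / T and w = x - mean x, so that w has mean zero and w' = v. The antiderivative W
   of w then vanishes at 0 and at T, and integration by parts together with Wirtinger's
   inequality a^2 int W^2 <= int w^2 gives
     int (v + a^2 W)^2 = int v^2 - 2 a^2 int w^2 + a^4 int W^2 <= int v^2 - a^2 int w^2.
   Hence T V(v) = int w^2 <= (T / pi)^2 int v^2, and since the kinetic term only increases the
   energy, V(v) / E(v) <= T / (pi^2 alpha_1). Equality forces v = - a^2 W, a harmonic
   oscillation, so v = C sin (pi t / T); v* is such a profile attaining the bound, and among
   admissible ones V grows with C^2 while admissibility bounds C by min(Vmax, pi L / (2 T)). *)

lemma integral_eq_diff_of_real_derivative: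
  fixes f f' :: "real \<Rightarrow> real"
  assumes "a \<le> b"
    and "\<And>x. x \<in> {a..b} \<Longrightarrow> (f has_real_derivative f' x) (at x within {a..b})"
  shows "integral {a..b} f' = f b - f a"
  using assms
  by (intro integral_unique fundamental_theorem_of_calculus)
     (auto simp: has_real_derivative_iff_has_vector_derivative)

lemma picone_identity_sine:
  fixes W :: "real \<Rightarrow> real"
  assumes s: "sin (b * t + d) \<noteq> 0"
    and W': "(W has_real_derivative w) (at t within S)"
  shows "((\<lambda>t. b * cot (b * t + d) * (W t)\<^sup>2) has_real_derivative
           w\<^sup>2 - b\<^sup>2 * (W t)\<^sup>2 - (w - b * cot (b * t + d) * W t)\<^sup>2) (at t within S)"
proof -
  have s': "sin (d + b * t) \<noteq> 0" using s by (simp add: add.commute)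
  have "((\<lambda>t. b * cot (b * t + d) * (W t)\<^sup>2) has_real_derivative
        b * (- sin (b * t + d) * b * sin (b * t + d) - cos (b * t + d) * (cos (b * t + d) * b))
          / (sin (b * t + d))\<^sup>2 * (W t)\<^sup>2 + b * cot (b * t + d) * (2 * W t * w)) (at t within S)"
    unfolding cot_def
    by (auto intro!: derivative_eq_intros W' simp: s s' power2_eq_square field_simps)
  moreover have "b * (- sin (b * t + d) * b * sin (b * t + d) - cos (b * t + d) * (cos (b * t + d) * b))
          / (sin (b * t + d))\<^sup>2 * (W t)\<^sup>2 + b * cot (b * t + d) * (2 * W t * w)
        = w\<^sup>2 - b\<^sup>2 * (W t)\<^sup>2 - (w - b * cot (b * t + d) * W t)\<^sup>2"
    using s sin_cos_squared_add[of "b * t + d"]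
    by (simp add: cot_def field_simps power2_eq_square)
  ultimately show ?thesis by simp
qed

lemma wirtinger_dirichlet_subcritical:
  fixes W w :: "real \<Rightarrow> real" and b T :: real
  assumes "0 \<le> T" "0 < b" "b * T < pi"
    and W0: "W 0 = 0" and WT: "W T = 0"
    and W': "\<And>t. t \<in> {0..T} \<Longrightarrow> (W has_real_derivative w t) (at t within {0..T})"
    and cw: "continuous_on {0..T} w"
  shows "b\<^sup>2 * integral {0..T} (\<lambda>t. (W t)\<^sup>2) \<le> integral {0..T} (\<lambda>t. (w t)\<^sup>2)"
proof -
  \<comment> \<open>The phase shift d keeps the solution sin (b t + d) of y'' + b^2 y = 0 positive on the
    closed interval, so Picone's identity applies on all of it.\<close>
  define d where "d = (pi - b * T) / 2"
  have sin_pos: "sin (b * t + d) > 0" if "t \<in> {0..T}" for t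
  proof (rule sin_gt_zero)
    have "0 \<le> b * t" "b * t \<le> b * T" using that \<open>0 < b\<close> by (auto intro: mult_left_mono)
    then show "0 < b * t + d" and "b * t + d < pi"
      using \<open>b * T < pi\<close> by (simp_all add: d_def field_simps)
  qed
  define g where "g t = (w t - b * cot (b * t + d) * W t)\<^sup>2" for t
  have sin_nonzero: "sin (b * t + d) \<noteq> 0" if "0 \<le> t" "t \<le> T" for t
    using sin_pos[of t] that by simp
  have cW: "continuous_on {0..T} W" using W' by (rule DERIV_continuous_on)
  have cg: "continuous_on {0..T} g"
    unfolding g_def cot_def using cW cw by (intro continuous_intros) (auto simp: sin_nonzero)
  have "integral {0..T} (\<lambda>t. (w t)\<^sup>2 - b\<^sup>2 * (W t)\<^sup>2 - g t)
      = b * cot (b * T + d) * (W T)\<^sup>2 - b * cot (b * 0 + d) * (W 0)\<^sup>2"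
    using \<open>0 \<le> T\<close> unfolding g_def
    by (intro integral_eq_diff_of_real_derivative picone_identity_sine W') (auto simp: sin_nonzero)
  also have "\<dots> = 0" by (simp add: W0 WT)
  finally have "integral {0..T} (\<lambda>t. (w t)\<^sup>2) - b\<^sup>2 * integral {0..T} (\<lambda>t. (W t)\<^sup>2)
      - integral {0..T} g = 0"
    using cw cW cg
    by (simp add: integral_diff integrable_diff integrable_continuous_real continuous_intros)
  moreover have "integral {0..T} g \<ge> 0"
    using cg by (intro integral_nonneg integrable_continuous_real) (auto simp: g_def)
  ultimately show ?thesis by linarith
qed

lemma wirtinger_dirichlet:
  fixes W w :: "real \<Rightarrow> real" and T :: real
  assumes "0 < T" and "W 0 = 0" and "W T = 0"
    and "\<And>t. t \<in> {0..T} \<Longrightarrow> (W has_real_derivative w t) (at t within {0..T})"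
    and "continuous_on {0..T} w"
  shows "(pi / T)\<^sup>2 * integral {0..T} (\<lambda>t. (W t)\<^sup>2) \<le> integral {0..T} (\<lambda>t. (w t)\<^sup>2)"
proof (rule field_le_mult_one_interval)
  fix z :: real
  assume z: "0 < z" "z < 1"
  have "sqrt z * pi / T * T < pi" using z \<open>0 < T\<close> by (simp add: real_sqrt_less_iff)
  then have "(sqrt z * pi / T)\<^sup>2 * integral {0..T} (\<lambda>t. (W t)\<^sup>2) \<le> integral {0..T} (\<lambda>t. (w t)\<^sup>2)"
    using assms z by (intro wirtinger_dirichlet_subcritical) auto
  then show "z * ((pi / T)\<^sup>2 * integral {0..T} (\<lambda>t. (W t)\<^sup>2)) \<le> integral {0..T} (\<lambda>t. (w t)\<^sup>2)"
    using z by (simp add: power_mult_distrib power_divide)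
qed

lemma harmonic_oscillator_sine:
  fixes W w :: "real \<Rightarrow> real" and a T t :: real
  assumes W': "\<And>t. t \<in> {0..T} \<Longrightarrow> (W has_real_derivative w t) (at t within {0..T})"
    and w': "\<And>t. t \<in> {0..T} \<Longrightarrow> (w has_real_derivative - (a\<^sup>2 * W t)) (at t within {0..T})"
    and W0: "W 0 = 0" and t: "t \<in> {0..T}"
  shows "a * W t = w 0 * sin (a * t)"
proof -
  define P where "P t = w t * sin (a * t) - a * W t * cos (a * t)" for t
  define Q where "Q t = w t * cos (a * t) + a * W t * sin (a * t)" for t
  have "\<exists>c. \<forall>t\<in>{0..T}. P t = c"
  proof (rule has_field_derivative_zero_constant)
    fix t assume "t \<in> {0..T}"
    then show "(P has_real_derivative 0) (at t within {0..T})"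
      unfolding P_def using W' w'
      by (auto intro!: derivative_eq_intros simp: algebra_simps power2_eq_square)
  qed simp
  then obtain cP where cP: "\<And>t. t \<in> {0..T} \<Longrightarrow> P t = cP" by blast
  have "\<exists>c. \<forall>t\<in>{0..T}. Q t = c"
  proof (rule has_field_derivative_zero_constant)
    fix t assume "t \<in> {0..T}"
    then show "(Q has_real_derivative 0) (at t within {0..T})"
      unfolding Q_def using W' w'
      by (auto intro!: derivative_eq_intros simp: algebra_simps power2_eq_square)
  qed simp
  then obtain cQ where cQ: "\<And>t. t \<in> {0..T} \<Longrightarrow> Q t = cQ" by blast
  have "0 \<in> {0..T}" using t by auto
  then have "P t = P 0" "Q t = Q 0" using cP cQ t by auto
  then have "P t = 0" "Q t = w 0" by (simp_all add: P_def Q_def W0)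
  moreover have "sin (a * t) * Q t - cos (a * t) * P t
      = a * W t * ((sin (a * t))\<^sup>2 + (cos (a * t))\<^sup>2)"
    unfolding P_def Q_def power2_eq_square by algebra
  ultimately show ?thesis by (simp add: mult.commute)
qed

lemma mean_zero_wirtinger_defect:
  fixes v w :: "real \<Rightarrow> real" and T :: real
  assumes "0 < T"
    and w': "\<And>t. t \<in> {0..T} \<Longrightarrow> (w has_real_derivative v t) (at t within {0..T})"
    and cv: "continuous_on {0..T} v"
    and mean: "integral {0..T} w = 0"
  shows "integral {0..T} (\<lambda>t. (v t + (pi / T)\<^sup>2 * integral {0..t} w)\<^sup>2)
           \<le> integral {0..T} (\<lambda>t. (v t)\<^sup>2) - (pi / T)\<^sup>2 * integral {0..T} (\<lambda>t. (w t)\<^sup>2)"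
proof -
  define a where "a = pi / T"
  define W where "W t = integral {0..t} w" for t
  have cw: "continuous_on {0..T} w" using w' by (rule DERIV_continuous_on)
  have W': "(W has_real_derivative w t) (at t within {0..T})" if "t \<in> {0..T}" for t
    unfolding W_def using cw that by (rule integral_has_real_derivative)
  have cW: "continuous_on {0..T} W" using W' by (rule DERIV_continuous_on)
  have W0: "W 0 = 0" and WT: "W T = 0" using mean by (simp_all add: W_def)
  define I0 I1 I2 J where "I0 = integral {0..T} (\<lambda>t. (W t)\<^sup>2)"
    and "I1 = integral {0..T} (\<lambda>t. (w t)\<^sup>2)" and "I2 = integral {0..T} (\<lambda>t. (v t)\<^sup>2)"
    and "J = integral {0..T} (\<lambda>t. W t * v t)"
  have "integral {0..T} (\<lambda>t. (w t)\<^sup>2 + W t * v t) = W T * w T - W 0 * w 0"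
    using \<open>0 < T\<close> W' w'
    by (intro integral_eq_diff_of_real_derivative)
       (auto intro!: derivative_eq_intros simp: power2_eq_square)
  then have parts: "J = - I1"
    using cw cW cv by (simp add: I1_def J_def W0 WT integral_add integrable_continuous_real continuous_intros)
  have "a\<^sup>2 * I0 \<le> I1"
    unfolding a_def I0_def I1_def using \<open>0 < T\<close> W0 WT W' cw by (rule wirtinger_dirichlet)
  then have wirtinger: "a\<^sup>2 * (a\<^sup>2 * I0) \<le> a\<^sup>2 * I1" by (rule mult_left_mono) simp
  have "integral {0..T} (\<lambda>t. (v t + a\<^sup>2 * W t)\<^sup>2)
      = integral {0..T} (\<lambda>t. (v t)\<^sup>2 + (2 * a\<^sup>2) * (W t * v t) + a\<^sup>2 * a\<^sup>2 * (W t)\<^sup>2)"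
    by (simp add: power2_eq_square algebra_simps)
  also have "\<dots> = I2 + 2 * a\<^sup>2 * J + a\<^sup>2 * (a\<^sup>2 * I0)"
    using cv cW unfolding I0_def I2_def J_def
    by (simp add: integral_add integrable_continuous_real continuous_intros)
  also have "\<dots> \<le> I2 - a\<^sup>2 * I1"
    using wirtinger by (simp add: parts mult.commute)
  finally show ?thesis by (simp add: a_def W_def I1_def I2_def)
qed

lemma mean_zero_wirtinger:
  fixes v w :: "real \<Rightarrow> real" and T :: real
  assumes "0 < T"
    and w': "\<And>t. t \<in> {0..T} \<Longrightarrow> (w has_real_derivative v t) (at t within {0..T})"
    and cv: "continuous_on {0..T} v"
    and mean: "integral {0..T} w = 0"
  shows "(pi / T)\<^sup>2 * integral {0..T} (\<lambda>t. (w t)\<^sup>2) \<le> integral {0..T} (\<lambda>t. (v t)\<^sup>2)"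
    and "(pi / T)\<^sup>2 * integral {0..T} (\<lambda>t. (w t)\<^sup>2) = integral {0..T} (\<lambda>t. (v t)\<^sup>2)
           \<Longrightarrow> \<exists>C. \<forall>t\<in>{0..T}. v t = C * sin (pi * t / T)"
proof -
  define a where "a = pi / T"
  define W where "W t = integral {0..t} w" for t
  have cw: "continuous_on {0..T} w" using w' by (rule DERIV_continuous_on)
  have W': "(W has_real_derivative w t) (at t within {0..T})" if "t \<in> {0..T}" for t
    unfolding W_def using cw that by (rule integral_has_real_derivative)
  have cW: "continuous_on {0..T} W" using W' by (rule DERIV_continuous_on)
  define g where "g t = (v t + a\<^sup>2 * W t)\<^sup>2" for t
  have cg: "continuous_on {0..T} g" unfolding g_def using cv cW by (intro continuous_intros)
  have g_nonneg: "integral {0..T} g \<ge> 0"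
    using cg by (intro integral_nonneg integrable_continuous_real) (auto simp: g_def)
  have defect: "integral {0..T} g
      \<le> integral {0..T} (\<lambda>t. (v t)\<^sup>2) - a\<^sup>2 * integral {0..T} (\<lambda>t. (w t)\<^sup>2)"
    unfolding g_def a_def W_def using assms by (rule mean_zero_wirtinger_defect)
  with g_nonneg show "(pi / T)\<^sup>2 * integral {0..T} (\<lambda>t. (w t)\<^sup>2) \<le> integral {0..T} (\<lambda>t. (v t)\<^sup>2)"
    by (simp add: a_def)
  assume "(pi / T)\<^sup>2 * integral {0..T} (\<lambda>t. (w t)\<^sup>2) = integral {0..T} (\<lambda>t. (v t)\<^sup>2)"
  with defect g_nonneg have "integral {0..T} g = 0" by (simp add: a_def)
  then have "\<forall>t\<in>{0..T}. g t = 0"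
    using cg \<open>0 < T\<close> by (subst (asm) integral_eq_0_iff) (auto simp: g_def)
  then have v_eq: "v t = - (a\<^sup>2 * W t)" if "t \<in> {0..T}" for t
    using that by (simp add: g_def add_eq_0_iff)
  have w'': "(w has_real_derivative - (a\<^sup>2 * W t)) (at t within {0..T})" if "t \<in> {0..T}" for t
    using w'[OF that] v_eq[OF that] by simp
  have "W 0 = 0" by (simp add: W_def)
  have oscillator: "a * W t = w 0 * sin (a * t)" if "t \<in> {0..T}" for t
    using W' w'' \<open>W 0 = 0\<close> that by (rule harmonic_oscillator_sine)
  have "v t = - a * w 0 * sin (pi * t / T)" if "t \<in> {0..T}" for t
  proof -
    have "v t = - a * (a * W t)" using v_eq[OF that] by (simp add: power2_eq_square)
    also have "\<dots> = - a * w 0 * sin (a * t)" using oscillator[OF that] by simp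
    finally show ?thesis by (simp add: a_def)
  qed
  then show "\<exists>C. \<forall>t\<in>{0..T}. v t = C * sin (pi * t / T)" by blast
qed

lemma spatial_var_bound:
  fixes v :: "real \<Rightarrow> real" and T :: real
  assumes "0 < T" and cv: "continuous_on {0..T} v"
  shows "pi\<^sup>2 * spatial_var T v \<le> T * integral {0..T} (\<lambda>t. (v t)\<^sup>2)"
    and "pi\<^sup>2 * spatial_var T v = T * integral {0..T} (\<lambda>t. (v t)\<^sup>2)
           \<Longrightarrow> \<exists>C. \<forall>t\<in>{0..T}. v t = C * sin (pi * t / T)"
proof -
  define w where "w t = position v t - (1 / T) * integral {0..T} (position v)" for t
  have w': "(w has_real_derivative v t) (at t within {0..T})" if "t \<in> {0..T}" for t
    unfolding w_def position_def[abs_def] using cv that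
    by (auto intro!: derivative_eq_intros integral_has_real_derivative)
  have "continuous_on {0..T} (position v)"
    unfolding position_def[abs_def]
    by (rule DERIV_continuous_on, rule integral_has_real_derivative[OF cv]) auto
  then have "integral {0..T} w = 0"
    using \<open>0 < T\<close> unfolding w_def by (simp add: integral_diff integrable_continuous_real)
  note wirtinger = mean_zero_wirtinger[OF \<open>0 < T\<close> w' cv this]
  have "pi\<^sup>2 * spatial_var T v = T * ((pi / T)\<^sup>2 * integral {0..T} (\<lambda>t. (w t)\<^sup>2))"
    using \<open>0 < T\<close> by (simp add: spatial_var_def w_def power2_eq_square)
  with wirtinger \<open>0 < T\<close> show "pi\<^sup>2 * spatial_var T v \<le> T * integral {0..T} (\<lambda>t. (v t)\<^sup>2)"
    and "pi\<^sup>2 * spatial_var T v = T * integral {0..T} (\<lambda>t. (v t)\<^sup>2)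
           \<Longrightarrow> \<exists>C. \<forall>t\<in>{0..T}. v t = C * sin (pi * t / T)"
    by auto
qed

lemma sin_half_period_nonneg:
  assumes "0 < T" and "t \<in> {0..T}"
  shows "0 \<le> sin (pi * t / T)"
  using assms by (intro sin_ge_zero) (auto simp: divide_le_eq)

lemma integral_cos_square_half_period:
  assumes "0 < T"
  shows "integral {0..T} (\<lambda>t. (cos (pi * t / T))\<^sup>2) = T / 2"
proof -
  have "integral {0..T} (\<lambda>t. (cos (pi * t / T))\<^sup>2)
      = (T / 2 + T * sin (2 * pi * T / T) / (4 * pi)) - (0 / 2 + T * sin (2 * pi * 0 / T) / (4 * pi))"
  proof (rule integral_eq_diff_of_real_derivative)
    fix t assume "t \<in> {0..T}"
    have "((\<lambda>t. t / 2 + T * sin (2 * pi * t / T) / (4 * pi)) has_real_derivative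
        1 / 2 + cos (2 * pi * t / T) / 2) (at t within {0..T})"
      using \<open>0 < T\<close> by (auto intro!: derivative_eq_intros simp: field_simps)
    moreover have "1 / 2 + cos (2 * pi * t / T) / 2 = (cos (pi * t / T))\<^sup>2"
      using cos_double_cos[of "pi * t / T"] by (simp add: mult.assoc field_simps)
    ultimately show "((\<lambda>t. t / 2 + T * sin (2 * pi * t / T) / (4 * pi)) has_real_derivative
        (cos (pi * t / T))\<^sup>2) (at t within {0..T})" by simp
  qed (use \<open>0 < T\<close> in simp)
  then show ?thesis using \<open>0 < T\<close> by simp
qed

lemma integral_sin_square_half_period:
  assumes "0 < T"
  shows "integral {0..T} (\<lambda>t. (sin (pi * t / T))\<^sup>2) = T / 2"
proof -
  have "integral {0..T} (\<lambda>t. (sin (pi * t / T))\<^sup>2) = integral {0..T} (\<lambda>t. 1 - (cos (pi * t / T))\<^sup>2)"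
    by (simp add: sin_squared_eq)
  also have "\<dots> = T - T / 2"
    using assms by (simp add: integral_diff integrable_continuous_real continuous_intros
        integral_cos_square_half_period)
  finally show ?thesis by simp
qed

lemma position_sine_profile:
  assumes "0 < T" and v: "\<And>t. t \<in> {0..T} \<Longrightarrow> v t = C * sin (pi * t / T)" and "t \<in> {0..T}"
  shows "position v t = C * T / pi * (1 - cos (pi * t / T))"
proof -
  have "position v t = integral {0..t} (\<lambda>u. C * sin (pi * u / T))"
    unfolding position_def using \<open>t \<in> {0..T}\<close> by (intro integral_cong) (auto simp: v)
  also have "\<dots> = - C * T / pi * cos (pi * t / T) - - C * T / pi * cos (pi * 0 / T)"
    using \<open>0 < T\<close> \<open>t \<in> {0..T}\<close>
    by (intro integral_eq_diff_of_real_derivative) (auto intro!: derivative_eq_intros)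
  finally show ?thesis by (simp add: algebra_simps)
qed

lemma integral_sine_profile:
  assumes "0 < T" and "\<And>t. t \<in> {0..T} \<Longrightarrow> v t = C * sin (pi * t / T)"
  shows "integral {0..T} v = 2 * C * T / pi"
  using position_sine_profile[OF assms, of T] \<open>0 < T\<close> by (simp add: position_def)

lemma integral_square_sine_profile:
  assumes "0 < T" and v: "\<And>t. t \<in> {0..T} \<Longrightarrow> v t = C * sin (pi * t / T)"
  shows "integral {0..T} (\<lambda>t. (v t)\<^sup>2) = C\<^sup>2 * T / 2"
proof -
  have "integral {0..T} (\<lambda>t. (v t)\<^sup>2) = integral {0..T} (\<lambda>t. C\<^sup>2 * (sin (pi * t / T))\<^sup>2)"
    by (intro integral_cong) (simp add: v power_mult_distrib)
  then show ?thesis using integral_sin_square_half_period[OF \<open>0 < T\<close>] by simp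
qed

lemma spatial_var_sine_profile:
  assumes "0 < T" and v: "\<And>t. t \<in> {0..T} \<Longrightarrow> v t = C * sin (pi * t / T)"
  shows "spatial_var T v = C\<^sup>2 * T\<^sup>2 / (2 * pi\<^sup>2)"
proof -
  define K where "K = C * T / pi"
  have x: "position v t = K * (1 - cos (pi * t / T))" if "t \<in> {0..T}" for t
    unfolding K_def using assms that by (rule position_sine_profile)
  have "integral {0..T} (position v) = integral {0..T} (\<lambda>t. K * (1 - cos (pi * t / T)))"
    by (intro integral_cong) (simp add: x)
  also have "\<dots> = K * (T - T / pi * sin (pi * T / T)) - K * (0 - T / pi * sin (pi * 0 / T))"
    using \<open>0 < T\<close> by (intro integral_eq_diff_of_real_derivative) (auto intro!: derivative_eq_intros)
  finally have "(1 / T) * integral {0..T} (position v) = K" using \<open>0 < T\<close> by simp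
  then have "integral {0..T} (\<lambda>t. (position v t - (1 / T) * integral {0..T} (position v))\<^sup>2)
      = integral {0..T} (\<lambda>t. K\<^sup>2 * (cos (pi * t / T))\<^sup>2)"
    by (intro integral_cong) (simp add: x power2_eq_square algebra_simps)
  also have "\<dots> = K\<^sup>2 * T / 2" using integral_cos_square_half_period[OF \<open>0 < T\<close>] by simp
  finally show ?thesis
    using \<open>0 < T\<close> by (simp add: spatial_var_def K_def power_mult_distrib power_divide)
qed

lemma mech_energy_linear_damping:
  "mech_energy T ma a1 0 v = ma / 2 * (v T)\<^sup>2 + a1 * integral {0..T} (\<lambda>t. (v t)\<^sup>2)"
  by (simp add: mech_energy_def)

lemma admissible_integral_square_pos:
  assumes "0 < T" and v: "admissible T L Vmax v"
  shows "0 < integral {0..T} (\<lambda>t. (v t)\<^sup>2)"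
proof -
  have cv: "continuous_on {0..T} v" using v by (simp add: admissible_def)
  then have "integral {0..T} (\<lambda>t. (v t)\<^sup>2) \<noteq> 0"
    using v \<open>0 < T\<close> by (subst integral_eq_0_iff) (auto intro: continuous_intros simp: admissible_def)
  moreover have "integral {0..T} (\<lambda>t. (v t)\<^sup>2) \<ge> 0"
    using cv by (intro integral_nonneg integrable_continuous_real continuous_intros) auto
  ultimately show ?thesis by linarith
qed

lemma admissible_vstar:
  assumes "0 < T" "0 < L" "0 < Vmax"
  shows "admissible T L Vmax (vstar T L Vmax)"
proof -
  define c where "c = min Vmax (pi * L / (2 * T))"
  have c: "0 < c" "c \<le> Vmax" "c \<le> pi * L / (2 * T)" using assms by (auto simp: c_def)
  have v: "vstar T L Vmax t = c * sin (pi * t / T)" for t by (simp add: vstar_def c_def)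
  show ?thesis
    unfolding admissible_def
  proof (intro conjI ballI)
    show "continuous_on {0..T} (vstar T L Vmax)"
      unfolding v[abs_def] using \<open>0 < T\<close> by (auto intro!: continuous_intros)
    show "vstar T L Vmax 0 = 0" by (simp add: v)
    have "integral {0..T} (vstar T L Vmax) = 2 * c * T / pi"
      using \<open>0 < T\<close> v by (intro integral_sine_profile) auto
    also have "\<dots> \<le> L" using c \<open>0 < T\<close> by (simp add: field_simps)
    finally show "integral {0..T} (vstar T L Vmax) \<le> L" .
    have "vstar T L Vmax (T / 2) = c" using \<open>0 < T\<close> by (simp add: v)
    then show "\<exists>t\<in>{0..T}. vstar T L Vmax t \<noteq> 0"
      using c \<open>0 < T\<close> by (intro bexI[of _ "T / 2"]) auto
  next
    fix t assume "t \<in> {0..T}"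
    then show "0 \<le> vstar T L Vmax t"
      using c \<open>0 < T\<close> by (simp add: v sin_half_period_nonneg)
    have "c * sin (pi * t / T) \<le> c * 1" using c by (intro mult_left_mono) auto
    then show "vstar T L Vmax t \<le> Vmax" unfolding v using c by linarith
  qed
qed

lemma spatial_var_admissible_sine_profile_le_vstar:
  assumes "0 < T" and v: "admissible T L Vmax v"
    and C: "\<And>t. t \<in> {0..T} \<Longrightarrow> v t = C * sin (pi * t / T)"
  shows "spatial_var T v \<le> spatial_var T (vstar T L Vmax)"
proof -
  define c where "c = min Vmax (pi * L / (2 * T))"
  have "T / 2 \<in> {0..T}" and "v (T / 2) = C" using \<open>0 < T\<close> by (simp_all add: C)
  then have "0 \<le> C" "C \<le> Vmax" using v by (auto simp: admissible_def)
  moreover have "2 * C * T / pi \<le> L"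
    using v integral_sine_profile[OF \<open>0 < T\<close> C] by (simp add: admissible_def)
  then have "C \<le> pi * L / (2 * T)" using \<open>0 < T\<close> by (simp add: field_simps)
  ultimately have "C\<^sup>2 \<le> c\<^sup>2" by (intro power_mono) (auto simp: c_def)
  then have "C\<^sup>2 * T\<^sup>2 / (2 * pi\<^sup>2) \<le> c\<^sup>2 * T\<^sup>2 / (2 * pi\<^sup>2)"
    by (intro divide_right_mono mult_right_mono) auto
  moreover have "spatial_var T (vstar T L Vmax) = c\<^sup>2 * T\<^sup>2 / (2 * pi\<^sup>2)"
    using \<open>0 < T\<close> by (rule spatial_var_sine_profile) (simp add: vstar_def c_def)
  ultimately show ?thesis using spatial_var_sine_profile[OF \<open>0 < T\<close> C] by simp
qed

lemma efficiency_bound: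
  assumes "0 < T" "0 \<le> ma" "0 < a1" and v: "admissible T L Vmax v"
  shows "spatial_var T v / mech_energy T ma a1 0 v \<le> T / (pi\<^sup>2 * a1)"
    and "spatial_var T v / mech_energy T ma a1 0 v = T / (pi\<^sup>2 * a1)
           \<Longrightarrow> \<exists>C. \<forall>t\<in>{0..T}. v t = C * sin (pi * t / T)"
proof -
  define I where "I = integral {0..T} (\<lambda>t. (v t)\<^sup>2)"
  have "0 < I" unfolding I_def using \<open>0 < T\<close> v by (rule admissible_integral_square_pos)
  have E: "a1 * I \<le> mech_energy T ma a1 0 v"
    using \<open>0 \<le> ma\<close> by (simp add: mech_energy_linear_damping I_def)
  have "continuous_on {0..T} v" using v by (simp add: admissible_def)
  note bound = spatial_var_bound[OF \<open>0 < T\<close> this, folded I_def]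
  have "0 < a1 * I" using \<open>0 < I\<close> \<open>0 < a1\<close> by simp
  with E have E_pos: "0 < mech_energy T ma a1 0 v" by linarith
  have ratio_iff: "spatial_var T v / mech_energy T ma a1 0 v \<le> T / (pi\<^sup>2 * a1)
      \<longleftrightarrow> pi\<^sup>2 * spatial_var T v * a1 \<le> T * mech_energy T ma a1 0 v"
    using E_pos \<open>0 < a1\<close> by (simp add: field_simps)
  have "pi\<^sup>2 * spatial_var T v * a1 \<le> T * I * a1"
    using bound(1) \<open>0 < a1\<close> by (simp add: mult_right_mono)
  also have "\<dots> \<le> T * mech_energy T ma a1 0 v"
    using E \<open>0 < T\<close> by (simp add: mult.commute)
  finally show "spatial_var T v / mech_energy T ma a1 0 v \<le> T / (pi\<^sup>2 * a1)"
    using ratio_iff by simp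
  assume "spatial_var T v / mech_energy T ma a1 0 v = T / (pi\<^sup>2 * a1)"
  then have "pi\<^sup>2 * spatial_var T v * a1 = T * mech_energy T ma a1 0 v"
    using E_pos \<open>0 < a1\<close> by (simp add: field_simps)
  also have "\<dots> \<ge> T * I * a1"
    using E \<open>0 < T\<close> by (simp add: mult.commute)
  finally have "pi\<^sup>2 * spatial_var T v = T * I"
    using bound(1) \<open>0 < a1\<close> by simp
  then show "\<exists>C. \<forall>t\<in>{0..T}. v t = C * sin (pi * t / T)" by (rule bound(2))
qed

lemma efficiency_vstar:
  assumes "0 < T" "0 < L" "0 < Vmax" "0 < a1"
  shows "spatial_var T (vstar T L Vmax) / mech_energy T ma a1 0 (vstar T L Vmax) = T / (pi\<^sup>2 * a1)"
proof -
  define c where "c = min Vmax (pi * L / (2 * T))"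
  have "0 < c" using assms by (auto simp: c_def)
  then have "c \<noteq> 0" by simp
  have v: "\<And>t. t \<in> {0..T} \<Longrightarrow> vstar T L Vmax t = c * sin (pi * t / T)"
    by (simp add: vstar_def c_def)
  have "vstar T L Vmax T = 0" using \<open>0 < T\<close> by (simp add: vstar_def)
  moreover have "integral {0..T} (\<lambda>t. (vstar T L Vmax t)\<^sup>2) = c\<^sup>2 * T / 2"
    using \<open>0 < T\<close> v by (rule integral_square_sine_profile)
  ultimately have energy: "mech_energy T ma a1 0 (vstar T L Vmax) = a1 * (c\<^sup>2 * T / 2)"
    by (simp add: mech_energy_linear_damping)
  have variance: "spatial_var T (vstar T L Vmax) = c\<^sup>2 * T\<^sup>2 / (2 * pi\<^sup>2)"
    using \<open>0 < T\<close> v by (rule spatial_var_sine_profile)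
  show ?thesis
    unfolding energy variance
    using \<open>c \<noteq> 0\<close> \<open>0 < T\<close> \<open>0 < a1\<close> by (simp add: field_simps power2_eq_square)
qed

theorem mainTheorem2:
  fixes T L Vmax ma a1 :: real
  assumes "T > 0" and "L > 0" and "Vmax > 0" and "ma > 0" and "a1 > 0"
  shows "admissible T L Vmax (vstar T L Vmax)
    \<and> (\<forall>v. admissible T L Vmax v \<longrightarrow>
          spatial_var T v / mech_energy T ma a1 0 v
            \<le> spatial_var T (vstar T L Vmax) / mech_energy T ma a1 0 (vstar T L Vmax))
    \<and> (\<forall>v. admissible T L Vmax v \<and>
          spatial_var T v / mech_energy T ma a1 0 v
            = spatial_var T (vstar T L Vmax) / mech_energy T ma a1 0 (vstar T L Vmax)
          \<longrightarrow> spatial_var T v \<le> spatial_var T (vstar T L Vmax))"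
proof -
  have "0 \<le> ma" using \<open>ma > 0\<close> by simp
  note efficiency = efficiency_bound[OF \<open>T > 0\<close> this \<open>a1 > 0\<close>]
  have vstar_ratio: "spatial_var T (vstar T L Vmax) / mech_energy T ma a1 0 (vstar T L Vmax)
      = T / (pi\<^sup>2 * a1)"
    using assms by (intro efficiency_vstar) auto
  have "spatial_var T v \<le> spatial_var T (vstar T L Vmax)"
    if v: "admissible T L Vmax v"
      and optimal: "spatial_var T v / mech_energy T ma a1 0 v = T / (pi\<^sup>2 * a1)" for v
  proof -
    obtain C where "\<forall>t\<in>{0..T}. v t = C * sin (pi * t / T)" using efficiency(2)[OF v optimal] by blast
    then show ?thesis
      using \<open>T > 0\<close> v by (intro spatial_var_admissible_sine_profile_le_vstar) auto
  qed
  then show ?thesis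
    using assms admissible_vstar efficiency(1) unfolding vstar_ratio by auto
qed

end
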